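(* Let $M$ be a primary submonoid of a free commutative monoid (of arbitrary rank). Then $M$ has finite rank $d:=\mathrm{rank}(M)$, and $M$ is isomorphic to a submonoid of $(\mathbb{N}^d,+)$.
   Context: Convention: all monoids are commutative, cancellative, and reduced, written additively; $M^\bullet=M\setminus\{0\}$; $\mathrm{rank}(M)$ is the rank of the Grothendieck group $\mathrm{gp}(M)$ as a $\mathbb{Z}$-module. $M$ is primary if $M$ is nontrivial and for all $x,y\in M^\bullet$ there is $n\in\mathbb{N}$ with $ny\in x+M$. *)

theory Defs
  imports Main
begin

text \<open>The free commutative monoid on a set of generators of type 'i (arbitrary rank):
  finitely supported functions 'i => nat under pointwise addition.\<close>
definition free_cmon :: "('i \<Rightarrow> nat) set" where
  "free_cmon = {f. finite {i. f i \<noteq> 0}}"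

definition madd :: "('i \<Rightarrow> nat) \<Rightarrow> ('i \<Rightarrow> nat) \<Rightarrow> ('i \<Rightarrow> nat)" where
  "madd x y = (\<lambda>i. x i + y i)"

definition is_submonoid_free :: "('i \<Rightarrow> nat) set \<Rightarrow> bool" where
  "is_submonoid_free M \<longleftrightarrow> M \<subseteq> free_cmon \<and> (\<lambda>_. 0) \<in> M \<and>
     (\<forall>x\<in>M. \<forall>y\<in>M. madd x y \<in> M)"

definition primary :: "('i \<Rightarrow> nat) set \<Rightarrow> bool" where
  "primary M \<longleftrightarrow> (\<exists>x\<in>M. x \<noteq> (\<lambda>_. 0)) \<and>
     (\<forall>x\<in>M. \<forall>y\<in>M. x \<noteq> (\<lambda>_. 0) \<longrightarrow> y \<noteq> (\<lambda>_. 0) \<longrightarrow>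
        (\<exists>n::nat. \<exists>z\<in>M. (\<lambda>i. n * y i) = madd x z))"

text \<open>Grothendieck group of a submonoid of the free commutative monoid, realised as
  the subgroup {x - y | x, y in M} of the free abelian group of finitely supported 'i => int.\<close>
definition gp :: "('i \<Rightarrow> nat) set \<Rightarrow> ('i \<Rightarrow> int) set" where
  "gp M = {(\<lambda>i. int (x i) - int (y i)) | x y. x \<in> M \<and> y \<in> M}"

definition int_lin_indep :: "('i \<Rightarrow> int) set \<Rightarrow> bool" where
  "int_lin_indep S \<longleftrightarrow> finite S \<and>
     (\<forall>c :: ('i \<Rightarrow> int) \<Rightarrow> int. (\<forall>i. (\<Sum>s\<in>S. c s * s i) = 0) \<longrightarrow> (\<forall>s\<in>S. c s = 0))"

definition has_rank :: "('i \<Rightarrow> int) set \<Rightarrow> nat \<Rightarrow> bool" where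
  "has_rank G d \<longleftrightarrow> (\<exists>S\<subseteq>G. int_lin_indep S \<and> card S = d) \<and>
     (\<forall>S\<subseteq>G. int_lin_indep S \<longrightarrow> card S \<le> d)"

end

theory Submission imports Defs Complex_Main "HOL-Library.Function_Algebras" begin

text \<open>
  Fix a nonzero x in M. Primarity forces every y in M to divide a multiple of x, so all of M is
  supported on the finite support of x; hence gp M lives in a finite-dimensional space and has
  finite rank d. Choose a minimal finite set J of coordinates on which elements of M are
  determined. Minimality yields, for each j in J, two elements of M that agree on J - {j} but
  not at j; their differences form a diagonal, hence independent, family in gp M, so
  card J \<le> d. Projecting onto J is then the required embedding into \<nat>^d.
\<close>

lemma primary_support_subset:
  assumes "primary M" "x \<in> M" "x \<noteq> (\<lambda>_. 0)" "y \<in> M" "x i = 0"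
  shows "y i = 0"
proof (cases "y = (\<lambda>_. 0)")
  case False
  then obtain n z where "(\<lambda>i. n * x i) = madd y z"
    using assms unfolding primary_def by blast
  hence "n * x i = y i + z i" unfolding madd_def by metis
  thus ?thesis using assms(5) by simp
qed simp

definition rat_scale :: "rat \<Rightarrow> ('i \<Rightarrow> rat) \<Rightarrow> ('i \<Rightarrow> rat)" where
  "rat_scale c f = (\<lambda>i. c * f i)"

interpretation rat_fun: vector_space "rat_scale :: rat \<Rightarrow> ('i \<Rightarrow> rat) \<Rightarrow> _"
  by unfold_locales (auto simp: rat_scale_def algebra_simps)

lemma sum_fun_apply: "(\<Sum>v\<in>A. f v) i = (\<Sum>v\<in>A. (f v :: 'i \<Rightarrow> 'b::comm_monoid_add) i)"
  by (induction A rule: infinite_finite_induct) auto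

lemma common_denominator:
  fixes c :: "'a \<Rightarrow> rat"
  assumes "finite A"
  shows "\<exists>D::int. D > 0 \<and> (\<forall>s\<in>A. of_int D * c s \<in> \<int>)"
  using assms
proof (induction A rule: finite_induct)
  case empty
  show ?case by (intro exI[of _ 1]) simp
next
  case (insert a A)
  then obtain D where D: "D > 0" "\<forall>s\<in>A. of_int D * c s \<in> \<int>" by blast
  obtain p q where pq: "quotient_of (c a) = (p, q)" by (cases "quotient_of (c a)")
  have q: "q > 0" and ca: "c a = of_int p / of_int q"
    using quotient_of_denom_pos[OF pq] quotient_of_div[OF pq] by auto
  have "of_int (D * q) * c a \<in> \<int>"
    using q ca by (simp add: Ints_mult)
  moreover have "of_int (D * q) * c s \<in> \<int>" if "s \<in> A" for s
    using D(2) that by (metis Ints_mult Ints_of_int mult.commute mult.left_commute of_int_mult)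
  ultimately show ?case using D(1) q by (intro exI[of _ "D * q"]) auto
qed

lemma int_lin_indep_rat_independent:
  fixes A :: "('i \<Rightarrow> int) set"
  assumes ind: "int_lin_indep A"
  shows "rat_fun.independent ((\<lambda>s i. rat_of_int (s i)) ` A)"
proof -
  define g :: "('i \<Rightarrow> int) \<Rightarrow> ('i \<Rightarrow> rat)" where "g s = (\<lambda>i. rat_of_int (s i))" for s
  have finA: "finite A" using ind unfolding int_lin_indep_def by auto
  have injg: "inj g" unfolding g_def inj_def by (metis ext of_int_eq_iff)
  show ?thesis
    unfolding g_def[symmetric] rat_fun.dependent_finite[OF finite_imageI[OF finA]]
  proof (intro notI, elim exE conjE bexE)
    fix c v assume v: "v \<in> g ` A" and c0: "(\<Sum>v\<in>g ` A. rat_scale (c v) v) = 0" and "c v \<noteq> 0"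
    obtain s0 where s0: "s0 \<in> A" "v = g s0" using v by auto
    obtain D :: int where D: "D > 0" "\<forall>s\<in>A. of_int D * c (g s) \<in> \<int>"
      using common_denominator[OF finA, of "\<lambda>s. c (g s)"] by blast
    define e where "e s = \<lfloor>of_int D * c (g s)\<rfloor>" for s
    have e: "of_int (e s) = of_int D * c (g s)" if "s \<in> A" for s
      using D(2) that unfolding e_def by (metis floor_of_int Ints_cases)
    have "(\<Sum>s\<in>A. e s * s i) = 0" for i
    proof -
      have "(\<Sum>s\<in>A. c (g s) * g s i) = 0"
        using fun_cong[OF c0, of i] injg
        by (simp add: sum_fun_apply rat_scale_def sum.reindex inj_on_def)
      hence "(\<Sum>s\<in>A. of_int (e s) * g s i) = 0"
        by (simp add: sum_distrib_left[symmetric] e mult.assoc cong: sum.cong)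
      hence "rat_of_int (\<Sum>s\<in>A. e s * s i) = 0" by (simp add: g_def)
      thus ?thesis by linarith
    qed
    hence "e s0 = 0" using ind s0 unfolding int_lin_indep_def by blast
    thus False using e[OF s0(1)] D(1) s0 \<open>c v \<noteq> 0\<close> by simp
  qed
qed

lemma supported_in_span_delta:
  fixes v :: "'i \<Rightarrow> rat"
  assumes "finite S" "\<forall>i. i \<notin> S \<longrightarrow> v i = 0"
  shows "v \<in> rat_fun.span ((\<lambda>i j. if j = i then 1 else 0) ` S)"
proof -
  have "v = (\<Sum>i\<in>S. rat_scale (v i) (\<lambda>j. if j = i then 1 else 0))"
  proof
    fix j
    have "(\<Sum>i\<in>S. rat_scale (v i) (\<lambda>j. if j = i then 1 else 0)) j = (if j \<in> S then v j else 0)"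
      using assms(1)
      by (simp add: sum_fun_apply rat_scale_def if_distrib[of "\<lambda>x. _ * x"] cong: if_cong)
    thus "v j = (\<Sum>i\<in>S. rat_scale (v i) (\<lambda>j. if j = i then 1 else 0)) j"
      using assms(2) by auto
  qed
  also have "\<dots> \<in> rat_fun.span ((\<lambda>i j. if j = i then 1 else 0) ` S)"
    by (intro rat_fun.span_sum rat_fun.span_scale rat_fun.span_base) auto
  finally show ?thesis .
qed

lemma int_lin_indep_card_le_support:
  fixes A :: "('i \<Rightarrow> int) set"
  assumes "finite S" "\<forall>s\<in>A. \<forall>i. i \<notin> S \<longrightarrow> s i = 0" "int_lin_indep A"
  shows "card A \<le> card S"
proof -
  let ?g = "\<lambda>s i. rat_of_int (s i)"
  let ?\<delta> = "\<lambda>i j. if j = i then (1::rat) else 0"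
  have injg: "inj ?g" unfolding inj_def by (metis ext of_int_eq_iff)
  have "?g ` A \<subseteq> rat_fun.span (?\<delta> ` S)"
    using assms(1,2) by (auto intro!: supported_in_span_delta)
  hence "card (?g ` A) \<le> card (?\<delta> ` S)"
    using rat_fun.independent_span_bound int_lin_indep_rat_independent[OF assms(3)] assms(1)
    by blast
  also have "\<dots> \<le> card S" using assms(1) card_image_le by blast
  finally show ?thesis using card_image[OF inj_on_subset[OF injg subset_UNIV[of A]]] by simp
qed

lemma has_rank_if_supported:
  assumes "finite S" "\<forall>s\<in>G. \<forall>i. i \<notin> S \<longrightarrow> s i = 0"
  shows "\<exists>d. has_rank G d"
proof -
  define R where "R = {card A | A. A \<subseteq> G \<and> int_lin_indep A}"
  have "finite R"
    using int_lin_indep_card_le_support[OF assms(1)] assms(2)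
    unfolding R_def by (intro finite_nat_set_iff_bounded_le[THEN iffD2]) blast
  moreover have "card {} \<in> R" unfolding R_def int_lin_indep_def by (rule CollectI, rule exI[of _ "{}"]) simp
  ultimately have max_in: "Max R \<in> R" and le_max: "\<And>r. r \<in> R \<Longrightarrow> r \<le> Max R"
    by (auto intro: Max_in)
  from max_in obtain A where A: "A \<subseteq> G" "int_lin_indep A" "card A = Max R"
    unfolding R_def by auto
  have "\<forall>B\<subseteq>G. int_lin_indep B \<longrightarrow> card B \<le> Max R"
    using le_max unfolding R_def by blast
  with A have "has_rank G (Max R)" unfolding has_rank_def by blast
  thus ?thesis ..
qed

lemma diagonal_int_lin_indep:
  assumes "finite J" and diag: "\<And>j. j \<in> J \<Longrightarrow> w j j \<noteq> 0"
    and off: "\<And>j k. j \<in> J \<Longrightarrow> k \<in> J \<Longrightarrow> k \<noteq> j \<Longrightarrow> w j k = 0"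
  shows "int_lin_indep (w ` J)" "card (w ` J) = card J"
proof -
  have injw: "inj_on w J" by (rule inj_onI) (metis diag off)
  show "card (w ` J) = card J" using card_image[OF injw] .
  show "int_lin_indep (w ` J)"
    unfolding int_lin_indep_def
  proof (intro conjI allI impI ballI)
    fix c s assume c: "\<forall>i. (\<Sum>s\<in>w ` J. c s * s i) = 0" and s: "s \<in> w ` J"
    then obtain j where j: "j \<in> J" "s = w j" by blast
    have "0 = (\<Sum>k\<in>J. c (w k) * w k j)" using c injw by (simp add: sum.reindex)
    also have "\<dots> = c (w j) * w j j"
      using assms(1) j by (subst sum.remove[of _ j]) (auto intro!: sum.neutral dest: off[of _ j])
    finally show "c s = 0" using diag[OF j(1)] j by simp
  qed (use assms(1) in simp)
qed

definition separating_coords :: "('i \<Rightarrow> nat) set \<Rightarrow> 'i set \<Rightarrow> bool" where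
  "separating_coords M J \<longleftrightarrow> (\<forall>x\<in>M. \<forall>y\<in>M. (\<forall>j\<in>J. x j = y j) \<longrightarrow> x = y)"

lemma exists_minimal_separating_coords:
  assumes "finite S" "separating_coords M S"
  obtains J where "finite J" "separating_coords M J"
    "\<And>j. j \<in> J \<Longrightarrow> \<not> separating_coords M (J - {j})"
proof -
  let ?P = "\<lambda>n. \<exists>J. finite J \<and> separating_coords M J \<and> card J = n"
  obtain n where n: "?P n" "\<And>m. m < n \<Longrightarrow> \<not> ?P m"
    using exists_least_iff[of ?P] assms by blast
  then obtain J where J: "finite J" "separating_coords M J" "card J = n" by blast
  have "\<not> separating_coords M (J - {j})" if "j \<in> J" for j
  proof
    assume "separating_coords M (J - {j})"
    moreover have "card (J - {j}) < n" using card_Diff1_less[OF J(1) that] J(3) by simp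
    ultimately show False using n(2) J(1) by blast
  qed
  with J that show ?thesis by blast
qed

lemma minimal_separating_coords_card_le_rank:
  assumes "finite J" "separating_coords M J"
    and min: "\<And>j. j \<in> J \<Longrightarrow> \<not> separating_coords M (J - {j})"
    and "has_rank (gp M) d"
  shows "card J \<le> d"
proof -
  have "\<exists>x y. x \<in> M \<and> y \<in> M \<and> (\<forall>k\<in>J-{j}. x k = y k) \<and> x j \<noteq> y j" if j: "j \<in> J" for j
  proof -
    obtain x y where xy: "x \<in> M" "y \<in> M" "x \<noteq> y" and agree: "\<forall>k\<in>J-{j}. x k = y k"
      using min[OF j] unfolding separating_coords_def by blast
    have "x j \<noteq> y j"
    proof
      assume "x j = y j"
      with agree have "\<forall>k\<in>J. x k = y k" by blast
      with assms(2) xy show False unfolding separating_coords_def by blast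
    qed
    with xy agree show ?thesis by blast
  qed
  then obtain X Y where XY: "\<And>j. j \<in> J \<Longrightarrow>
      X j \<in> M \<and> Y j \<in> M \<and> (\<forall>k\<in>J-{j}. X j k = Y j k) \<and> X j j \<noteq> Y j j"
    by metis
  define w where "w j = (\<lambda>i. int (X j i) - int (Y j i))" for j
  have diag: "w j j \<noteq> 0" if "j \<in> J" for j
    using XY[OF that] unfolding w_def by simp
  have off: "w j k = 0" if "j \<in> J" "k \<in> J" "k \<noteq> j" for j k
    using XY[OF that(1)] that unfolding w_def by simp
  have "w ` J \<subseteq> gp M" unfolding gp_def w_def using XY by blast
  with diagonal_int_lin_indep(1)[of J w, OF assms(1) diag off] assms(4)
  have "card (w ` J) \<le> d" unfolding has_rank_def by blast
  thus ?thesis using diagonal_int_lin_indep(2)[of J w, OF assms(1) diag off] by simp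
qed

lemma separating_coords_embedding:
  assumes "finite J" "separating_coords M J"
  obtains f :: "('i \<Rightarrow> nat) \<Rightarrow> (nat \<Rightarrow> nat)" where "inj_on f M" "f (\<lambda>_. 0) = (\<lambda>_. 0)"
    "\<forall>x y. f (madd x y) = madd (f x) (f y)" "\<forall>x. \<forall>m\<ge>card J. f x m = 0"
proof -
  obtain h where h: "bij_betw h {0..<card J} J" using ex_bij_betw_nat_finite[OF assms(1)] by blast
  define f :: "('i \<Rightarrow> nat) \<Rightarrow> (nat \<Rightarrow> nat)" where
    "f x = (\<lambda>m. if m < card J then x (h m) else 0)" for x
  have "inj_on f M"
  proof (rule inj_onI)
    fix x y assume xy: "x \<in> M" "y \<in> M" "f x = f y"
    have "x j = y j" if j: "j \<in> J" for j
    proof -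
      obtain m where "m < card J" "j = h m"
        using h j unfolding bij_betw_def by (metis atLeastLessThan_iff imageE)
      thus ?thesis using fun_cong[OF xy(3), of m] unfolding f_def by simp
    qed
    thus "x = y" using assms(2) xy unfolding separating_coords_def by blast
  qed
  moreover have "f (\<lambda>_. 0) = (\<lambda>_. 0)" "\<forall>x y. f (madd x y) = madd (f x) (f y)"
    "\<forall>x. \<forall>m\<ge>card J. f x m = 0"
    unfolding f_def madd_def by auto
  ultimately show ?thesis by (rule that)
qed

theorem mainTheorem14:
  fixes M :: "('i \<Rightarrow> nat) set"
  assumes "is_submonoid_free M" and "primary M"
  shows "\<exists>d. has_rank (gp M) d \<and>
           (\<exists>f :: ('i \<Rightarrow> nat) \<Rightarrow> (nat \<Rightarrow> nat).
              inj_on f M \<and> f (\<lambda>_. 0) = (\<lambda>_. 0) \<and>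
              (\<forall>x\<in>M. \<forall>y\<in>M. f (madd x y) = madd (f x) (f y)) \<and>
              (\<forall>x\<in>M. \<forall>j\<ge>d. f x j = 0))"
proof -
  obtain x0 where x0: "x0 \<in> M" "x0 \<noteq> (\<lambda>_. 0)" using assms(2) unfolding primary_def by blast
  define S where "S = {i. x0 i \<noteq> 0}"
  have "finite S"
    using assms(1) x0(1) unfolding S_def is_submonoid_free_def free_cmon_def by auto
  have supp: "y i = 0" if "y \<in> M" "i \<notin> S" for y i
    using primary_support_subset[OF assms(2) x0 that(1)] that(2) unfolding S_def by blast
  have "\<forall>s\<in>gp M. \<forall>i. i \<notin> S \<longrightarrow> s i = 0" unfolding gp_def by (auto simp: supp)
  then obtain d where d: "has_rank (gp M) d" using has_rank_if_supported[OF \<open>finite S\<close>] by blast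
  have "separating_coords M S" using supp unfolding separating_coords_def by (metis ext)
  then obtain J where J: "finite J" "separating_coords M J"
    "\<And>j. j \<in> J \<Longrightarrow> \<not> separating_coords M (J - {j})"
    using exists_minimal_separating_coords \<open>finite S\<close> by blast
  have "card J \<le> d" using minimal_separating_coords_card_le_rank[OF J d] .
  obtain f where "inj_on f M" "f (\<lambda>_. 0) = (\<lambda>_. 0)" "\<forall>x y. f (madd x y) = madd (f x) (f y)"
    "\<forall>x. \<forall>m\<ge>card J. f x m = 0"
    using separating_coords_embedding[OF J(1,2)] .
  with d \<open>card J \<le> d\<close> show ?thesis by (meson order_trans)
qed

end
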